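(* Let $\gamma_1,\dots,\gamma_B$ be i.i.d. with density $f(\gamma)=\frac{m^m\gamma^{m-1}}{\Gamma(m)}e^{-m\gamma}$, $\gamma\ge0$ ($m>0$), let $\beta>0$ and $0<R\le I_{\mathcal X}(\beta)$. With $I^\beta_{\mathcal X}(\rho)=I_{\mathcal X}(\beta)\mathbf 1\{\rho\ge\beta\}$, there is a constant $\mathcal K_\beta>0$ such that, as $P\to\infty$, \[ \Pr\Big(\frac1B\sum_{b=1}^B I^\beta_{\mathcal X}(P\gamma_b)<R\Big)\doteq \mathcal K_\beta P^{-m\,d_\beta(R)},\qquad d_\beta(R)=1+\Big\lfloor B\Big(1-\frac{R}{I_{\mathcal X}(\beta)}\Big)\Big\rfloor. \]
   Context: $I_{\mathcal X}(\rho)$ is the mutual information (bits) of the AWGN channel with SNR $\rho$ and uniform input on a discrete constellation $\mathcal X$; $I_{\mathcal X}(\beta)>0$. Exponential equality: $f(P)\doteq KP^{-d}$ means $\lim_{P\to\infty}f(P)P^d=K$. *)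

theory Defs
  imports "HOL-Probability.Probability"
begin

definition nakagami_pdf :: "real \<Rightarrow> real \<Rightarrow> real" where
  "nakagami_pdf m g = (if g \<ge> 0 then m powr m * g powr (m - 1) / Gamma m * exp (- m * g) else 0)"

definition nakagami_measure :: "real \<Rightarrow> real measure" where
  "nakagami_measure m = density lborel (\<lambda>g. ennreal (nakagami_pdf m g))"

text \<open>Thresholded mutual information  I^beta(rho) = I(beta) * 1{rho \<ge> beta};
  the argument Ibeta stands for the value I_X(beta) > 0.\<close>
definition thr_MI :: "real \<Rightarrow> real \<Rightarrow> real \<Rightarrow> real" where
  "thr_MI Ibeta beta rho = (if rho \<ge> beta then Ibeta else 0)"

definition outage_prob :: "real \<Rightarrow> nat \<Rightarrow> real \<Rightarrow> real \<Rightarrow> real \<Rightarrow> real \<Rightarrow> real" where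
  "outage_prob m B Ibeta beta R P =
     measure (PiM {..<B} (\<lambda>_. nakagami_measure m))
       {g \<in> space (PiM {..<B} (\<lambda>_. nakagami_measure m)).
          (1 / real B) * (\<Sum>b<B. thr_MI Ibeta beta (P * g b)) < R}"

end

theory Submission
  imports Defs "HOL-Real_Asymp.Real_Asymp"
begin

(* With the threshold c = beta/P, block b contributes I(beta) to the
   mutual-information sum iff gamma_b \<ge> c, so the outage event says that at least
   d = 1 + floor(B(1 - R/I(beta))) of the B blocks are in deep fade (gamma_b < c).
   For i.i.d. gains this event is a disjoint union of "fading patterns" S \<subseteq> {..<B},
   giving the binomial tail  sum_{|S| \<ge> d} a^|S| (1-a)^(B-|S|)  with a = F(beta/P),
   F the Nakagami distribution function.  Since the density behaves like
   m^m g^(m-1)/Gamma(m) near 0, F(beta/P) P^m tends to L = m^(m-1) beta^m / Gamma(m).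
   Multiplying the tail by P^(m d), every pattern with |S| > d vanishes and each of
   the (B choose d) patterns with |S| = d tends to L^d, so K = (B choose d) L^d. *)

section \<open>The Nakagami-m distribution\<close>

lemma nakagami_pdf_measurable [measurable]:
  "(\<lambda>g. ennreal (nakagami_pdf m g)) \<in> borel_measurable borel"
  unfolding nakagami_pdf_def by measurable

lemma space_nakagami_measure [simp]: "space (nakagami_measure m) = UNIV"
  unfolding nakagami_measure_def by simp

lemma sets_nakagami_measure [simp]: "sets (nakagami_measure m) = sets borel"
  unfolding nakagami_measure_def by simp

text \<open>The density integrates to one: substitute t = m x in Euler's integral for Gamma(m).\<close>
lemma nakagami_pdf_integral:
  assumes m: "m > 0"
  shows "(\<integral>\<^sup>+x. ennreal (nakagami_pdf m x) \<partial>lborel) = 1"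
proof -
  define G where "G x = indicator {0..} x * x powr (m - 1) * exp (- m * x)" for x :: real
  have [measurable]: "G \<in> borel_measurable borel" unfolding G_def by measurable
  define F where "F t = ennreal (indicator {0..} t * t powr (m - 1) / exp t)" for t :: real
  have [measurable]: "F \<in> borel_measurable borel" unfolding F_def by measurable
  have F_scaled: "F (0 + m * x) = ennreal (m powr (m - 1)) * ennreal (G x)" for x
  proof (cases "x \<ge> 0")
    case True
    then show ?thesis using m unfolding F_def G_def
      by (simp add: powr_mult exp_minus field_simps ennreal_mult[symmetric])
  next
    case False
    then have "m * x < 0" using m by (simp add: mult_pos_neg)
    then show ?thesis using False unfolding F_def G_def by (simp add: indicator_def)
  qed
  have "ennreal (Gamma m) = (\<integral>\<^sup>+t. F t \<partial>lborel)"
    unfolding F_def using Gamma_conv_nn_integral_real[OF m] by simp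
  also have "\<dots> = ennreal m * (\<integral>\<^sup>+x. F (0 + m * x) \<partial>lborel)"
    using m nn_integral_real_affine[of F m 0] by simp
  also have "\<dots> = ennreal m * (ennreal (m powr (m - 1)) * (\<integral>\<^sup>+x. ennreal (G x) \<partial>lborel))"
    unfolding F_scaled by (subst nn_integral_cmult) auto
  finally have Gamma_eq: "ennreal (Gamma m) = ennreal (m powr m) * (\<integral>\<^sup>+x. ennreal (G x) \<partial>lborel)"
    using m by (simp add: ennreal_mult'[symmetric] mult.assoc[symmetric] powr_diff)
  have pdf_eq: "ennreal (nakagami_pdf m x) = ennreal (1 / Gamma m) * ennreal (m powr m) * ennreal (G x)" for x
    using m Gamma_real_pos[OF m] unfolding nakagami_pdf_def G_def
    by (auto simp: ennreal_mult[symmetric] indicator_def)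
  have "(\<integral>\<^sup>+x. ennreal (nakagami_pdf m x) \<partial>lborel)
      = ennreal (1 / Gamma m) * (ennreal (m powr m) * (\<integral>\<^sup>+x. ennreal (G x) \<partial>lborel))"
    unfolding pdf_eq mult.assoc by (simp add: nn_integral_cmult)
  also have "\<dots> = 1"
    unfolding Gamma_eq[symmetric] using Gamma_real_pos[OF m] by (simp add: ennreal_mult'[symmetric])
  finally show ?thesis .
qed

lemma prob_space_nakagami: "m > 0 \<Longrightarrow> prob_space (nakagami_measure m)"
  by (rule prob_spaceI)
     (simp add: nakagami_measure_def emeasure_density nakagami_pdf_integral)

lemma emeasure_nakagami_below:
  "emeasure (nakagami_measure m) {..<c} = (\<integral>\<^sup>+x. ennreal (nakagami_pdf m x * indicator {..<c} x) \<partial>lborel)"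
  unfolding nakagami_measure_def
  by (subst emeasure_density) (auto intro!: nn_integral_cong simp: indicator_def)

lemma nn_integral_powr_segment:
  assumes m: "m > 0" and c: "c \<ge> 0"
  shows "(\<integral>\<^sup>+x. ennreal (indicator {0..c} x * x powr (m - 1)) \<partial>lborel) = ennreal (c powr m / m)"
proof -
  have "((\<lambda>x. x powr (m - 1)) has_integral (c powr (m - 1 + 1) / (m - 1 + 1))) {0..c}"
    using m c by (intro has_integral_powr_from_0) auto
  then show ?thesis using nn_integral_has_integral_lebesgue[of "{0..c}" "\<lambda>x. x powr (m - 1)"]
    by simp
qed

lemma nakagami_pdf_below_bounds:
  assumes m: "m > 0" and x: "0 \<le> x" "x < c"
  shows "m powr m / Gamma m * exp (- m * c) * x powr (m - 1) \<le> nakagami_pdf m x"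
    and "nakagami_pdf m x \<le> m powr m / Gamma m * x powr (m - 1)"
proof -
  define C where "C = m powr m / Gamma m"
  have C: "C > 0" unfolding C_def using m Gamma_real_pos[OF m] by simp
  have pdf: "nakagami_pdf m x = C * x powr (m - 1) * exp (- m * x)"
    using x unfolding nakagami_pdf_def C_def by simp
  have "exp (- m * c) \<le> exp (- m * x)" "exp (- m * x) \<le> 1"
    using m x by (simp_all add: mult_nonneg_nonneg)
  note bounds = mult_left_mono[OF this(1), of "C * x powr (m - 1)"]
    mult_left_mono[OF this(2), of "C * x powr (m - 1)"]
  have "C * exp (- m * c) * x powr (m - 1) \<le> nakagami_pdf m x"
    and "nakagami_pdf m x \<le> C * x powr (m - 1)"
    unfolding pdf using bounds C by (simp_all add: ac_simps)
  then show "m powr m / Gamma m * exp (- m * c) * x powr (m - 1) \<le> nakagami_pdf m x"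
    and "nakagami_pdf m x \<le> m powr m / Gamma m * x powr (m - 1)"
    unfolding C_def .
qed

lemma nakagami_below_bounds:
  assumes m: "m > 0" and c: "c > 0"
  shows "m powr m / Gamma m * exp (- m * c) * (c powr m / m) \<le> measure (nakagami_measure m) {..<c}"
    and "measure (nakagami_measure m) {..<c} \<le> m powr m / Gamma m * (c powr m / m)"
proof -
  interpret prob_space "nakagami_measure m" by (rule prob_space_nakagami[OF m])
  define C where "C = m powr m / Gamma m"
  have C: "C > 0" unfolding C_def using m Gamma_real_pos[OF m] by simp
  define h where "h x = indicator {0..c} x * x powr (m - 1)" for x :: real
  define f where "f x = nakagami_pdf m x * indicator {..<c} x" for x
  have integral_h: "(\<integral>\<^sup>+x. ennreal (k * h x) \<partial>lborel) = ennreal (k * (c powr m / m))" if "k \<ge> 0" for k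
  proof -
    have "(\<integral>\<^sup>+x. ennreal (k * h x) \<partial>lborel) = ennreal k * (\<integral>\<^sup>+x. ennreal (h x) \<partial>lborel)"
      using that by (simp add: ennreal_mult' nn_integral_cmult h_def)
    also have "\<dots> = ennreal (k * (c powr m / m))"
      unfolding h_def nn_integral_powr_segment[OF m less_imp_le[OF c]] using that by (simp add: ennreal_mult'[symmetric])
    finally show ?thesis .
  qed
  have upper: "f x \<le> C * h x" for x
    using nakagami_pdf_below_bounds(2)[OF m, of x c] C Gamma_real_pos[OF m]
    by (cases "0 \<le> x \<and> x < c") (auto simp: C_def f_def h_def nakagami_pdf_def indicator_def)
  have lower: "C * exp (- m * c) * h x \<le> f x" if "x \<noteq> c" for x
    using nakagami_pdf_below_bounds(1)[OF m, of x c] C that Gamma_real_pos[OF m]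
    by (cases "0 \<le> x \<and> x < c") (auto simp: C_def f_def h_def nakagami_pdf_def indicator_def)
  have "emeasure (nakagami_measure m) {..<c} \<le> (\<integral>\<^sup>+x. ennreal (C * h x) \<partial>lborel)"
    unfolding emeasure_nakagami_below f_def[symmetric]
    by (intro nn_integral_mono ennreal_leI upper)
  then show "measure (nakagami_measure m) {..<c} \<le> C * (c powr m / m)"
    unfolding integral_h[OF less_imp_le[OF C]] emeasure_eq_measure
    using C m by (simp add: ennreal_le_iff)
  have Ce: "0 \<le> C * exp (- m * c)" using C by simp
  have "ennreal (C * exp (- m * c) * (c powr m / m)) \<le> emeasure (nakagami_measure m) {..<c}"
    unfolding integral_h[OF Ce, symmetric] emeasure_nakagami_below f_def[symmetric]
    by (intro nn_integral_mono_AE, rule eventually_mono[OF AE_lborel_singleton[of c]])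
       (intro ennreal_leI lower)
  then show "C * exp (- m * c) * (c powr m / m) \<le> measure (nakagami_measure m) {..<c}"
    unfolding emeasure_eq_measure using C m by (simp add: ennreal_le_iff)
qed

lemma nakagami_below_asymptotics:
  fixes m beta :: real
  assumes m: "m > 0" and beta: "beta > 0"
  shows "((\<lambda>P. measure (nakagami_measure m) {..<beta/P} * P powr m)
            \<longlongrightarrow> m powr m / Gamma m * (beta powr m / m)) at_top"
    and "((\<lambda>P. measure (nakagami_measure m) {..<beta/P}) \<longlongrightarrow> 0) at_top"
proof -
  define L where "L = m powr m / Gamma m * (beta powr m / m)"
  define F where "F P = measure (nakagami_measure m) {..<beta/P}" for P
  have scale: "m powr m / Gamma m * ((beta / P) powr m / m) * P powr m = L" if "P > 0" for P
    using that beta unfolding L_def by (simp add: powr_divide)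
  have lower: "eventually (\<lambda>P. L * exp (- m * (beta / P)) \<le> F P * P powr m) at_top"
    using eventually_gt_at_top[of 0]
  proof eventually_elim
    case (elim P)
    have "m powr m / Gamma m * exp (- m * (beta / P)) * ((beta/P) powr m / m) * P powr m \<le> F P * P powr m"
      unfolding F_def using nakagami_below_bounds(1)[OF m, of "beta/P"] elim beta
      by (intro mult_right_mono) simp_all
    also have "m powr m / Gamma m * exp (- m * (beta / P)) * ((beta/P) powr m / m) * P powr m
        = (m powr m / Gamma m * ((beta / P) powr m / m) * P powr m) * exp (- m * (beta / P))"
      by (simp only: ac_simps)
    finally show ?case unfolding scale[OF elim] .
  qed
  have upper: "eventually (\<lambda>P. F P \<le> m powr m / Gamma m * ((beta / P) powr m / m)) at_top"
    using eventually_gt_at_top[of 0]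
    by eventually_elim (use nakagami_below_bounds(2)[OF m] beta in \<open>simp add: F_def\<close>)
  have upper_scaled: "eventually (\<lambda>P. F P * P powr m \<le> L) at_top"
    using upper eventually_gt_at_top[of 0]
    by eventually_elim (metis scale mult_right_mono powr_ge_zero)
  have "((\<lambda>P. L * exp (- m * (beta / P))) \<longlongrightarrow> L) at_top"
    using m beta by real_asymp
  then show "((\<lambda>P. F P * P powr m) \<longlongrightarrow> L) at_top"
    by (rule tendsto_sandwich[OF lower upper_scaled _ tendsto_const])
  have "((\<lambda>P. m powr m / Gamma m * ((beta / P) powr m / m)) \<longlongrightarrow> 0) at_top"
    using m beta by real_asymp
  then show "(F \<longlongrightarrow> 0) at_top"
    by (intro tendsto_sandwich[OF _ upper tendsto_const]) (auto simp: F_def)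
qed

section \<open>Fading patterns of an i.i.d. product\<close>

lemma pattern_set_iff:
  assumes g: "g \<in> PiE I (\<lambda>i. if i \<in> S then A else X - A)" and S: "S \<subseteq> I"
  shows "{i\<in>I. g i \<in> A} = S"
  using S g by (fastforce simp: PiE_iff split: if_splits)

lemma measure_pattern:
  assumes N: "prob_space N" and I: "finite I" and A: "A \<in> sets N" and S: "S \<subseteq> I"
  shows "measure (PiM I (\<lambda>_. N)) (PiE I (\<lambda>i. if i \<in> S then A else space N - A))
       = measure N A ^ card S * (1 - measure N A) ^ (card I - card S)"
proof -
  interpret N: prob_space N by (rule N)
  interpret product_sigma_finite "\<lambda>_. N" by unfold_locales
  interpret M: prob_space "PiM I (\<lambda>_. N)" by (intro prob_space_PiM N)
  define p where "p = measure N A"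
  have p: "0 \<le> p" "p \<le> 1" unfolding p_def by auto
  have factor: "emeasure N (if i \<in> S then A else space N - A) = ennreal (if i \<in> S then p else 1 - p)" for i
    using A N.prob_compl[OF A] by (simp add: N.emeasure_eq_measure p_def)
  have "emeasure (PiM I (\<lambda>_. N)) (PiE I (\<lambda>i. if i \<in> S then A else space N - A))
      = (\<Prod>i\<in>I. ennreal (if i \<in> S then p else 1 - p))"
    using I A by (subst emeasure_PiM) (auto simp: factor)
  also have "\<dots> = ennreal (\<Prod>i\<in>I. if i \<in> S then p else 1 - p)"
    using p by (intro prod_ennreal) auto
  also have "(\<Prod>i\<in>I. if i \<in> S then p else 1 - p) = p ^ card S * (1 - p) ^ (card I - card S)"
  proof -
    have "I \<inter> {i. i \<in> S} = S" "I \<inter> - {i. i \<in> S} = I - S" using S by auto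
    moreover have "card (I - S) = card I - card S" using S I by (simp add: card_Diff_subset finite_subset)
    ultimately show ?thesis using I by (simp add: prod.If_cases)
  qed
  finally show ?thesis
    using p unfolding M.emeasure_eq_measure p_def by (simp add: ennreal_inj)
qed

lemma measure_PiM_pattern_event:
  fixes N :: "'a measure" and Q :: "'i set \<Rightarrow> bool"
  assumes N: "prob_space N" and I: "finite I" and A: "A \<in> sets N"
  shows "measure (PiM I (\<lambda>_. N)) {g \<in> space (PiM I (\<lambda>_. N)). Q {i\<in>I. g i \<in> A}}
       = (\<Sum>S\<in>{S. S \<subseteq> I \<and> Q S}. measure N A ^ card S * (1 - measure N A) ^ (card I - card S))"
proof -
  interpret M: prob_space "PiM I (\<lambda>_. N)" by (intro prob_space_PiM N)
  define E where "E S = PiE I (\<lambda>i. if i \<in> S then A else space N - A)" for S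
  define Fam where "Fam = {S. S \<subseteq> I \<and> Q S}"
  have space: "space (PiM I (\<lambda>_. N)) = PiE I (\<lambda>_. space N)" by (simp add: space_PiM)
  have E_iff: "g \<in> E S \<longleftrightarrow> g \<in> space (PiM I (\<lambda>_. N)) \<and> {i\<in>I. g i \<in> A} = S" if "S \<subseteq> I" for g S
    using that sets.sets_into_space[OF A] pattern_set_iff[of g I S A "space N"]
    unfolding E_def space by (auto simp: PiE_iff)
  have event: "{g \<in> space (PiM I (\<lambda>_. N)). Q {i\<in>I. g i \<in> A}} = (\<Union>S\<in>Fam. E S)"
    unfolding Fam_def using E_iff by auto
  have "measure (PiM I (\<lambda>_. N)) (\<Union>S\<in>Fam. E S) = (\<Sum>S\<in>Fam. measure (PiM I (\<lambda>_. N)) (E S))"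
  proof (rule measure_finite_Union)
    show "finite Fam" unfolding Fam_def by (rule finite_subset[of _ "Pow I"]) (use I in auto)
    show "E ` Fam \<subseteq> sets (PiM I (\<lambda>_. N))"
    proof (intro image_subsetI)
      show "E S \<in> sets (PiM I (\<lambda>_. N))" for S
        unfolding E_def using A by (intro sets_PiM_I_finite I) auto
    qed
    show "disjoint_family_on E Fam"
      unfolding disjoint_family_on_def Fam_def using E_iff by fastforce
    show "emeasure (PiM I (\<lambda>_. N)) (E S) \<noteq> \<infinity>" for S
      by simp
  qed
  also have "\<dots> = (\<Sum>S\<in>Fam. measure N A ^ card S * (1 - measure N A) ^ (card I - card S))"
    unfolding E_def Fam_def by (intro sum.cong refl measure_pattern N I A) auto
  finally show ?thesis unfolding event Fam_def .
qed

section \<open>The outage event\<close>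

definition diversity :: "nat \<Rightarrow> real \<Rightarrow> real \<Rightarrow> nat" where
  "diversity B Ibeta R = nat (1 + \<lfloor>real B * (1 - R / Ibeta)\<rfloor>)"

lemma diversity_bounds:
  assumes "B \<ge> 1" "Ibeta > 0" "0 < R" "R \<le> Ibeta"
  shows "diversity B Ibeta R \<le> B"
    and "real_of_int (1 + \<lfloor>real B * (1 - R / Ibeta)\<rfloor>) = real (diversity B Ibeta R)"
proof -
  have "0 \<le> real B * (1 - R / Ibeta)" "real B * (1 - R / Ibeta) < real B"
    using assms by (simp_all add: field_simps)
  then show "diversity B Ibeta R \<le> B"
    and "real_of_int (1 + \<lfloor>real B * (1 - R / Ibeta)\<rfloor>) = real (diversity B Ibeta R)"
    unfolding diversity_def by linarith+
qed

lemma rate_below_iff_diversity: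
  fixes B n :: nat and Ibeta R :: real
  assumes "B \<ge> 1" "Ibeta > 0" "R \<le> Ibeta"
  shows "(1 / real B) * (Ibeta * (real B - real n)) < R \<longleftrightarrow> diversity B Ibeta R \<le> n"
proof -
  have B: "real B > 0" using assms by simp
  have "0 \<le> real B * (1 - R / Ibeta)" using assms by (simp add: field_simps)
  moreover have "(1 / real B) * (Ibeta * (real B - real n)) < R \<longleftrightarrow> real B * (1 - R / Ibeta) < real n"
    using assms B by (simp add: field_simps)
  ultimately show ?thesis
    unfolding diversity_def by (simp add: floor_less_iff) linarith
qed

lemma sum_thr_MI:
  assumes P: "P > 0"
  shows "(\<Sum>b<B. thr_MI Ibeta beta (P * g b))
       = Ibeta * (real B - real (card {b\<in>{..<B}. g b \<in> {..<beta/P}}))"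
proof -
  let ?D = "{b\<in>{..<B}. g b \<in> {..<beta/P}}"
  have thr: "thr_MI Ibeta beta (P * x) = (if x \<notin> {..<beta/P} then Ibeta else 0)" for x
    unfolding thr_MI_def using P by (simp add: less_divide_eq mult.commute not_less)
  have "{..<B} - ?D = {b\<in>{..<B}. g b \<notin> {..<beta/P}}" by auto
  then have "(\<Sum>b<B. thr_MI Ibeta beta (P * g b)) = Ibeta * real (card ({..<B} - ?D))"
    unfolding thr using sum.inter_filter[of "{..<B}" "\<lambda>_. Ibeta" "\<lambda>b. g b \<notin> {..<beta/P}"]
    by (simp add: mult.commute)
  also have "card ({..<B} - ?D) = B - card ?D" by (subst card_Diff_subset) auto
  also have "real (B - card ?D) = real B - real (card ?D)"
    by (rule of_nat_diff) (rule order_trans[OF card_mono[of "{..<B}"]], auto)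
  finally show ?thesis .
qed

lemma outage_prob_binomial_tail:
  assumes m: "m > 0" and B: "B \<ge> 1" and I: "Ibeta > 0" and R: "R \<le> Ibeta" and P: "P > 0"
  shows "outage_prob m B Ibeta beta R P =
     (\<Sum>S\<in>{S. S \<subseteq> {..<B} \<and> diversity B Ibeta R \<le> card S}.
        measure (nakagami_measure m) {..<beta/P} ^ card S
          * (1 - measure (nakagami_measure m) {..<beta/P}) ^ (B - card S))"
proof -
  have "card {b\<in>{..<B}. g b \<in> {..<beta/P}} \<le> B" for g :: "nat \<Rightarrow> real"
    by (rule order_trans[OF card_mono[of "{..<B}"]]) auto
  then have "(1 / real B) * (\<Sum>b<B. thr_MI Ibeta beta (P * g b)) < R
      \<longleftrightarrow> diversity B Ibeta R \<le> card {b\<in>{..<B}. g b \<in> {..<beta/P}}" for g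
    unfolding sum_thr_MI[OF P] using rate_below_iff_diversity[OF B I R] by blast
  then show ?thesis
    unfolding outage_prob_def
    using measure_PiM_pattern_event[OF prob_space_nakagami[OF m], of "{..<B}" "{..<beta/P}"
        "\<lambda>S. diversity B Ibeta R \<le> card S"]
    by simp
qed

section \<open>Asymptotics of binomial tails\<close>

text \<open>If a(P) \<rightarrow> 0 and a(P) s(P) \<rightarrow> L, then the tail  sum_{|S| \<ge> d} a^|S| (1-a)^(|I|-|S|)
  scaled by s^d tends to (|I| choose d) L^d: only the patterns of size exactly d survive.\<close>
lemma binomial_tail_asymptotics:
  fixes a s :: "real \<Rightarrow> real" and I :: "'i set"
  assumes I: "finite I"
    and a0: "(a \<longlongrightarrow> 0) at_top" and as: "((\<lambda>P. a P * s P) \<longlongrightarrow> L) at_top"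
  shows "((\<lambda>P. (\<Sum>S\<in>{S. S \<subseteq> I \<and> d \<le> card S}. a P ^ card S * (1 - a P) ^ (card I - card S)) * s P ^ d)
           \<longlongrightarrow> real (card I choose d) * L ^ d) at_top"
proof -
  define Fam where "Fam = {S. S \<subseteq> I \<and> d \<le> card S}"
  have finFam: "finite Fam" unfolding Fam_def by (rule finite_subset[of _ "Pow I"]) (use I in auto)
  define t where "t (S :: 'i set) P = (a P * s P) ^ d * a P ^ (card S - d) * (1 - a P) ^ (card I - card S)" for S P
  have rewrite: "(\<Sum>S\<in>Fam. a P ^ card S * (1 - a P) ^ (card I - card S)) * s P ^ d = (\<Sum>S\<in>Fam. t S P)" for P
    unfolding sum_distrib_right
  proof (intro sum.cong refl)
    fix S assume "S \<in> Fam"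
    then have "a P ^ card S = a P ^ d * a P ^ (card S - d)"
      unfolding Fam_def by (simp flip: power_add)
    then show "a P ^ card S * (1 - a P) ^ (card I - card S) * s P ^ d = t S P"
      unfolding t_def by (simp add: power_mult_distrib algebra_simps)
  qed
  have "(t S \<longlongrightarrow> (if card S = d then L ^ d else 0)) at_top" if "d \<le> card S" for S
  proof -
    have "(t S \<longlongrightarrow> L ^ d * 0 ^ (card S - d) * (1 - 0) ^ (card I - card S)) at_top"
      unfolding t_def by (intro tendsto_intros as a0)
    then show ?thesis using that by (cases "card S = d") (simp_all add: power_0_left)
  qed
  then have "((\<lambda>P. \<Sum>S\<in>Fam. t S P) \<longlongrightarrow> (\<Sum>S\<in>Fam. if card S = d then L ^ d else 0)) at_top"
    by (intro tendsto_sum) (auto simp: Fam_def)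
  also have "(\<Sum>S\<in>Fam. if card S = d then L ^ d else 0) = real (card I choose d) * L ^ d"
  proof -
    have "Fam \<inter> {S. card S = d} = {S. S \<subseteq> I \<and> card S = d}" unfolding Fam_def by auto
    then show ?thesis using finFam n_subsets[OF I, of d] by (simp add: sum.If_cases)
  qed
  finally show ?thesis by (simp only: Fam_def[symmetric] rewrite)
qed

theorem mainTheorem6:
  fixes m beta R Ibeta :: real and B :: nat
  assumes "m > 0" and "B \<ge> 1" and "beta > 0"
    and "Ibeta > 0"
    and "0 < R" and "R \<le> Ibeta"
  shows "\<exists>K > 0. ((\<lambda>P. outage_prob m B Ibeta beta R P
             * P powr (m * real_of_int (1 + \<lfloor>real B * (1 - R / Ibeta)\<rfloor>)))
           \<longlongrightarrow> K) at_top"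
proof -
  note m = assms(1) and B = assms(2) and beta = assms(3) and I = assms(4) and R = assms(5,6)
  define d where "d = diversity B Ibeta R"
  define a where "a P = measure (nakagami_measure m) {..<beta/P}" for P
  define L where "L = m powr m / Gamma m * (beta powr m / m)"
  have d: "d \<le> B" "real_of_int (1 + \<lfloor>real B * (1 - R / Ibeta)\<rfloor>) = real d"
    using diversity_bounds[OF B I R] unfolding d_def by auto
  have tail: "((\<lambda>P. (\<Sum>S\<in>{S. S \<subseteq> {..<B} \<and> d \<le> card S}. a P ^ card S * (1 - a P) ^ (B - card S))
               * (P powr m) ^ d) \<longlongrightarrow> real (B choose d) * L ^ d) at_top"
    using binomial_tail_asymptotics[of "{..<B}" a "\<lambda>P. P powr m" L d]
      nakagami_below_asymptotics[OF m beta] unfolding a_def L_def by simp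
  have "eventually (\<lambda>P. (\<Sum>S\<in>{S. S \<subseteq> {..<B} \<and> d \<le> card S}. a P ^ card S * (1 - a P) ^ (B - card S))
          * (P powr m) ^ d = outage_prob m B Ibeta beta R P * P powr (m * real d)) at_top"
    using eventually_gt_at_top[of "0::real"]
  proof eventually_elim
    case (elim P)
    then have "P powr (m * real d) = (P powr m) ^ d" by (simp add: powr_powr[symmetric] powr_realpow)
    then show ?case unfolding outage_prob_binomial_tail[OF m B I R(2) elim] a_def d_def by simp
  qed
  from Lim_transform_eventually[OF tail this]
  have "((\<lambda>P. outage_prob m B Ibeta beta R P * P powr (m * real d)) \<longlongrightarrow> real (B choose d) * L ^ d) at_top" .
  moreover have "real (B choose d) * L ^ d > 0"
    using d m beta Gamma_real_pos[OF m] unfolding L_def by simp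
  ultimately show ?thesis unfolding d(2) by blast
qed

end
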